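(* Fix $c\in(0,1)$, let $S:=[-1,-c)\cup(c,1]$, and for $f\in L^1_{\mathrm{loc}}(\mathbb{R})$ let $Kf(\gamma):=\int_{\mathbb{R}} f(t)\,\chi_S(\gamma/|t|)\,dt$. Define $h_1:=\chi_S$ and, for $n\ge2$, $h_n:=Kh_{n-1}$, i.e. $$h_n(\gamma)=\int_{\mathbb{R}} h_{n-1}(t)\,\chi_S\Big(\frac{\gamma}{|t|}\Big)\,dt,\qquad\gamma\in\mathbb{R}.$$ Let $Q_n:=\int_{\mathbb{R}} h_n(\gamma)\,d\gamma$. Then the functions $h_n$, $n\in\mathbb{N}$, have the following properties: (i) $h_n$ is a spline (piecewise polynomial) with knots at the points $\pm c^n,\pm c^{n-1},\dots,\pm1$. (ii) $h_n$ is even. (iii) For $n\ge2$, $h_n\in C^{n-2}(\mathbb{R})$. (iv) $\operatorname{supp} h_n=[-1,-c^n]\cup[c^n,1]$ and $h_n>0$ on $(-1,-c^n)\cup(c^n,1)$. (v) $Q_n>0$ for all $n\in\mathbb{N}$, and $Q_1=2(1-c)$. (vi) For $n\ge2$, $\dfrac{1}{Q_{n-1}}\sum_{j\in\mathbb{Z}} h_n(c^j\gamma)=1$ for all $\gamma\in\mathbb{R}\setminus\{0\}$. (vii) For $n\ge2$, there exists a constant $C>0$ such that $C\le \dfrac{1}{Q_{n-1}^2}\sum_{j\in\mathbb{Z}}|h_n(c^j\gamma)|^2\le1$ for all $\gamma\in\mathbb{R}\setminus\{0\}$. (viii) For $n\ge2$, $$h_n(\gamma)=\frac{2}{n-1}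\Big[(1-|\gamma|)\,h_{n-1}(\gamma)+(c^{-1}|\gamma|-c^{n-1})\,h_{n-1}(c^{-1}\gamma)\Big],\qquad\gamma\in\mathbb{R}.$$
   Context: $\chi_S$ denotes the indicator function of $S$. *)

theory Defs
  imports "HOL-Analysis.Analysis" "HOL-Computational_Algebra.Polynomial"
begin

definition Sset :: "real \<Rightarrow> real set" where
  "Sset c = {-1..<-c} \<union> {c<..1}"

definition Kop :: "real \<Rightarrow> (real \<Rightarrow> real) \<Rightarrow> real \<Rightarrow> real" where
  "Kop c f \<gamma> = (\<integral>t. f t * indicator (Sset c) (\<gamma> / \<bar>t\<bar>) \<partial>lborel)"

text \<open>h_1 = chi_S, h_(n+1) = K h_n. The index 0 is a dummy (set equal to h_1) and never used.\<close>
fun hseq :: "real \<Rightarrow> nat \<Rightarrow> real \<Rightarrow> real" where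
  "hseq c 0 = indicator (Sset c)"
| "hseq c (Suc 0) = indicator (Sset c)"
| "hseq c (Suc (Suc n)) = Kop c (hseq c (Suc n))"

definition Qn :: "real \<Rightarrow> nat \<Rightarrow> real" where
  "Qn c n = (\<integral>\<gamma>. hseq c n \<gamma> \<partial>lborel)"

definition knots :: "real \<Rightarrow> nat \<Rightarrow> real set" where
  "knots c n = {x. \<exists>k\<le>n. x = c ^ k \<or> x = - (c ^ k)}"

definition spline_with_knots :: "real set \<Rightarrow> (real \<Rightarrow> real) \<Rightarrow> bool" where
  "spline_with_knots K f \<longleftrightarrow>
     (\<forall>a b. a < b \<and> {a<..<b} \<inter> K = {} \<longrightarrow> (\<exists>p::real poly. \<forall>x\<in>{a<..<b}. f x = poly p x))"

definition Ck :: "nat \<Rightarrow> (real \<Rightarrow> real) \<Rightarrow> bool" where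
  "Ck k f \<longleftrightarrow> (\<exists>D :: nat \<Rightarrow> real \<Rightarrow> real. D 0 = f \<and>
      (\<forall>j<k. \<forall>x. (D j has_real_derivative D (Suc j) x) (at x)) \<and>
      (\<forall>j\<le>k. continuous_on UNIV (D j)))"

end

theory Submission
  imports Defs
begin

(* On the positive half-line h_n is the function u_n (hplus c n below) with u_1 = indicator (c,1]
   and u_(n+1)(x) = 2 * integral of u_n over [x, x/c] for x > 0 (and 0 for x <= 0); indeed K
   applied to the even function u_n(x) + u_n(-x) gives exactly u_(n+1)(x) + u_(n+1)(-x).
   Support and positivity of u_n follow by induction, and the derivative
   u_(n+1)' = 2 (u_n(x/c)/c - u_n(x)) gains one order of smoothness per step. Integrating
   (t u_(n+1)(t))' over [x, x/c] gives the recurrence (viii), which in turn shows inductively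
   that u_n is a spline with knots c^k. The intervals [c^j |gamma|, c^(j-1) |gamma|] tile (0, oo), so the
   dilation sum telescopes to 2 * integral of u_(n-1) = Q_(n-1); only n consecutive terms are
   nonzero, and Cauchy-Schwarz gives the lower bound in (vii). *)

lemma Ck_0: "continuous_on UNIV f \<Longrightarrow> Ck 0 f"
  unfolding Ck_def by (rule exI[of _ "\<lambda>j. f"]) auto

lemma Ck_add:
  assumes "Ck k f" "Ck k g" shows "Ck k (\<lambda>x. f x + g x)"
proof -
  obtain D where D: "D 0 = f" "\<forall>j<k. \<forall>x. (D j has_real_derivative D (Suc j) x) (at x)"
    "\<forall>j\<le>k. continuous_on UNIV (D j)" using assms(1) unfolding Ck_def by blast
  obtain E where E: "E 0 = g" "\<forall>j<k. \<forall>x. (E j has_real_derivative E (Suc j) x) (at x)"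
    "\<forall>j\<le>k. continuous_on UNIV (E j)" using assms(2) unfolding Ck_def by blast
  show ?thesis unfolding Ck_def
  proof (intro exI[of _ "\<lambda>j x. D j x + E j x"] conjI allI impI)
    show "(\<lambda>x. D 0 x + E 0 x) = (\<lambda>x. f x + g x)" using D E by simp
    fix j x assume "j < k"
    then show "((\<lambda>x. D j x + E j x) has_real_derivative D (Suc j) x + E (Suc j) x) (at x)"
      using D(2) E(2) by (intro DERIV_add) auto
  next
    fix j assume "j \<le> k"
    then show "continuous_on UNIV (\<lambda>x. D j x + E j x)"
      using D(3) E(3) by (intro continuous_on_add) auto
  qed
qed

lemma Ck_cmult:
  assumes "Ck k f" shows "Ck k (\<lambda>x. a * f x)"
proof -
  obtain D where D: "D 0 = f" "\<forall>j<k. \<forall>x. (D j has_real_derivative D (Suc j) x) (at x)"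
    "\<forall>j\<le>k. continuous_on UNIV (D j)" using assms unfolding Ck_def by blast
  show ?thesis unfolding Ck_def
  proof (intro exI[of _ "\<lambda>j x. a * D j x"] conjI allI impI)
    show "(\<lambda>x. a * D 0 x) = (\<lambda>x. a * f x)" using D by simp
    fix j x assume "j < k"
    then show "((\<lambda>x. a * D j x) has_real_derivative a * D (Suc j) x) (at x)"
      using D(2) by (intro DERIV_cmult) auto
  next
    fix j assume "j \<le> k"
    then show "continuous_on UNIV (\<lambda>x. a * D j x)"
      using D(3) by (intro continuous_on_mult continuous_on_const) auto
  qed
qed

lemma Ck_compose_scale:
  assumes "Ck k f" shows "Ck k (\<lambda>x. f (a * x))"
proof -
  obtain D where D: "D 0 = f" "\<forall>j<k. \<forall>x. (D j has_real_derivative D (Suc j) x) (at x)"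
    "\<forall>j\<le>k. continuous_on UNIV (D j)" using assms unfolding Ck_def by blast
  show ?thesis unfolding Ck_def
  proof (intro exI[of _ "\<lambda>j x. a ^ j * D j (a * x)"] conjI allI impI)
    show "(\<lambda>x. a ^ 0 * D 0 (a * x)) = (\<lambda>x. f (a * x))" using D by simp
    fix j x assume j: "j < k"
    have "(D j has_real_derivative D (Suc j) (a * x)) (at (a * x))" using D(2) j by auto
    from DERIV_chain2[OF this DERIV_cmult[OF DERIV_ident, of a x]]
    have "((\<lambda>x. D j (a * x)) has_real_derivative D (Suc j) (a * x) * a) (at x)" by simp
    then show "((\<lambda>x. a ^ j * D j (a * x)) has_real_derivative a ^ Suc j * D (Suc j) (a * x)) (at x)"
      by (rule DERIV_cong[OF DERIV_cmult]) (simp add: algebra_simps)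
  next
    fix j assume "j \<le> k"
    then have "continuous_on UNIV (D j)" using D(3) by auto
    then have "continuous_on UNIV (\<lambda>x. D j (a * x))"
      by (rule continuous_on_compose2[OF _ continuous_on_mult_left[OF continuous_on_id]]) auto
    then show "continuous_on UNIV (\<lambda>x. a ^ j * D j (a * x))"
      by (intro continuous_on_mult continuous_on_const)
  qed
qed

lemma Ck_Suc_of_deriv:
  assumes d: "\<And>x. (f has_real_derivative g x) (at x)" and g: "Ck k g"
  shows "Ck (Suc k) f"
proof -
  obtain D where D: "D 0 = g" "\<forall>j<k. \<forall>x. (D j has_real_derivative D (Suc j) x) (at x)"
    "\<forall>j\<le>k. continuous_on UNIV (D j)" using g unfolding Ck_def by blast
  define D' where "D' = (\<lambda>j. if j = 0 then f else D (j - 1))"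
  show ?thesis unfolding Ck_def
  proof (intro exI[of _ D'] conjI allI impI)
    show "D' 0 = f" by (simp add: D'_def)
    fix j x assume "j < Suc k"
    then show "(D' j has_real_derivative D' (Suc j) x) (at x)"
      using d D(1,2) by (cases j) (auto simp: D'_def)
  next
    fix j assume "j \<le> Suc k"
    moreover have "continuous_on UNIV f"
      using d by (intro continuous_at_imp_continuous_on ballI DERIV_isCont) blast
    ultimately show "continuous_on UNIV (D' j)"
      using D(3) by (cases j) (auto simp: D'_def)
  qed
qed

lemma has_integral_dilate:
  fixes f :: "real \<Rightarrow> real"
  assumes "0 < c" "(f has_integral I) {a..b}"
  shows "((\<lambda>t. f (t / c)) has_integral c * I) {c * a..c * b}"
proof -
  have "((\<lambda>t. f (1/c * t)) has_integral (1 / \<bar>1/c\<bar>) *\<^sub>R I) ((\<lambda>t. t / (1/c)) ` {a..b})"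
    using assms by (intro has_integral_stretch_real) auto
  moreover have "(\<lambda>t. t / (1/c)) ` {a..b} = {c * a..c * b}"
    using assms(1) by (simp add: mult.commute[of _ c])
  ultimately show ?thesis using assms(1) by simp
qed

lemma lborel_integral_add_reflect:
  fixes g :: "real \<Rightarrow> real"
  assumes "integrable lborel g"
  shows "(\<integral>t. g t + g (-t) \<partial>lborel) = 2 * (\<integral>t. g t \<partial>lborel)"
proof -
  have "integrable lborel (\<lambda>t. g (-t))"
    using lborel_integrable_real_affine[OF assms, of "-1" 0] by simp
  moreover have "(\<integral>t. g (-t) \<partial>lborel) = (\<integral>t. g t \<partial>lborel)"
    using lborel_integral_real_affine[of "-1" g 0] by simp
  ultimately show ?thesis using assms by simp
qed

lemma lborel_integral_indicator_atLeastLessThan: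
  fixes f :: "real \<Rightarrow> real"
  assumes "set_integrable lborel {a..b} f"
  shows "(\<integral>t. indicator {a..<b} t *\<^sub>R f t \<partial>lborel) = integral {a..b} f"
proof -
  have "(\<integral>t. indicator {a..<b} t *\<^sub>R f t \<partial>lborel) = (\<integral>t. indicator {a..b} t *\<^sub>R f t \<partial>lborel)"
  proof (rule integral_cong_AE)
    have "set_integrable lborel {a..<b} f" by (rule set_integrable_subset[OF assms]) auto
    then show "(\<lambda>t. indicator {a..<b} t *\<^sub>R f t) \<in> borel_measurable lborel"
      unfolding set_integrable_def by (rule borel_measurable_integrable)
    show "(\<lambda>t. indicator {a..b} t *\<^sub>R f t) \<in> borel_measurable lborel"
      using assms unfolding set_integrable_def by (rule borel_measurable_integrable)
    show "AE t in lborel. indicator {a..<b} t *\<^sub>R f t = indicator {a..b} t *\<^sub>R f t"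
      using AE_lborel_singleton[of b] by eventually_elim (auto simp: indicator_def)
  qed
  also have "\<dots> = integral {a..b} f"
    using set_borel_integral_eq_integral(2)[OF assms] unfolding set_lebesgue_integral_def .
  finally show ?thesis .
qed

lemma integrable_indicator_greaterThanAtMost:
  "(indicator {p<..q} :: real \<Rightarrow> real) integrable_on {a..b}"
proof -
  have "(\<lambda>x::real. 1::real) integrable_on ({p..q} \<inter> {a..b})"
    by (simp only: Int_atLeastAtMost) (rule integrable_const_ivl)
  then have "(\<lambda>x::real. if x \<in> {p..q} then 1 else 0::real) integrable_on {a..b}"
    using integrable_restrict_Int[of "{p..q}" "\<lambda>_. 1::real" "{a..b}"] by simp
  then show ?thesis
    by (rule integrable_spike_finite[of "{p}", rotated 2]) (auto simp: indicator_def)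
qed

lemma integral_indicator_greaterThanAtMost:
  "integral {a..b} (indicator {p<..q} :: real \<Rightarrow> real)
     = (if max p a \<le> min q b then min q b - max p a else 0)"
proof -
  have "integral {a..b} (indicator {p<..q} :: real \<Rightarrow> real)
      = integral {a..b} (\<lambda>x. if x \<in> {p..q} then 1 else (0::real))"
    by (rule integral_spike[where S="{p}"]) (auto simp: indicator_def)
  also have "\<dots> = integral ({p..q} \<inter> {a..b}) (\<lambda>_. 1::real)" by (rule integral_restrict_Int)
  also have "{p..q} \<inter> {a..b} = {max p a..min q b}" by auto
  finally show ?thesis by simp
qed

lemma infsum_eq_sum_if_vanishing_outside:
  assumes "finite A" "\<And>x. x \<notin> A \<Longrightarrow> f x = 0"
  shows "(\<Sum>\<^sub>\<infinity>x. f x) = sum f A"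
proof -
  have "infsum f UNIV = infsum f A" by (rule infsum_cong_neutral) (use assms in auto)
  then show ?thesis using assms(1) by simp
qed

lemma sum_power2_le_power2_sum:
  fixes x :: "'a \<Rightarrow> real"
  assumes "finite A" "\<And>j. j \<in> A \<Longrightarrow> 0 \<le> x j"
  shows "(\<Sum>j\<in>A. (x j)\<^sup>2) \<le> (\<Sum>j\<in>A. x j)\<^sup>2"
proof -
  have "(\<Sum>j\<in>A. (x j)\<^sup>2) \<le> (\<Sum>j\<in>A. x j * (\<Sum>i\<in>A. x i))"
    using assms by (intro sum_mono) (auto simp: power2_eq_square intro!: mult_left_mono member_le_sum)
  also have "\<dots> = (\<Sum>j\<in>A. x j)\<^sup>2" by (simp add: power2_eq_square sum_distrib_right)
  finally show ?thesis .
qed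

section \<open>The functions on the positive half-line\<close>

fun hplus :: "real \<Rightarrow> nat \<Rightarrow> real \<Rightarrow> real" where
  "hplus c 0 = indicator {c<..1}"
| "hplus c (Suc 0) = indicator {c<..1}"
| "hplus c (Suc (Suc n)) = (\<lambda>x. if 0 < x then 2 * integral {x..x/c} (hplus c (Suc n)) else 0)"

locale knot_ratio =
  fixes c :: real
  assumes c_pos: "0 < c" and c_less_1: "c < 1"
begin

lemma c_power_pos: "0 < c ^ n"
  using c_pos by simp

lemma c_power_le_1: "c ^ n \<le> 1"
  using c_pos c_less_1 by (simp add: power_le_one)

lemma c_power_less_1: "n \<ge> 1 \<Longrightarrow> c ^ n < 1"
  using c_pos c_less_1 by (simp add: power_less_one_iff)

lemma c_power_int_antimono: "i \<le> j \<Longrightarrow> c powi j \<le> c powi i"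
  using c_pos c_less_1 by (intro power_int_decreasing) auto

lemma le_divide_c: "0 \<le> x \<Longrightarrow> x \<le> x / c"
  using c_pos c_less_1 by (simp add: pos_le_divide_eq mult_left_le)

lemma hplus_nonneg_and_support:
  assumes "n \<ge> 1"
  shows "hplus c n x \<ge> 0 \<and> (hplus c n x \<noteq> 0 \<longrightarrow> c ^ n < x \<and> x \<le> 1)"
  using assms
proof (induction n arbitrary: x rule: dec_induct)
  case base
  then show ?case using c_pos by (simp add: indicator_def)
next
  case (step n)
  show ?case
  proof (cases "0 < x")
    case False
    then show ?thesis using step.hyps by (cases n) auto
  next
    case True
    have vanish: "integral {x..x/c} (hplus c n) = 0" if "1 < x \<or> x / c \<le> c ^ n"
    proof -
      have "integral {x..x/c} (hplus c n) = integral {x..x/c} (\<lambda>_. 0::real)"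
        using step.IH that by (intro integral_cong) (metis atLeastAtMost_iff order.trans not_less)
      then show ?thesis by simp
    qed
    have "0 \<le> integral {x..x/c} (hplus c n)"
      using step.IH by (cases "hplus c n integrable_on {x..x/c}")
        (auto intro: integral_nonneg simp: not_integrable_integral)
    moreover have "x / c \<le> c ^ n \<longleftrightarrow> x \<le> c ^ Suc n"
      using c_pos by (simp add: pos_divide_le_eq mult.commute)
    moreover have "hplus c (Suc n) x = 2 * integral {x..x/c} (hplus c n)"
      using True step.hyps by (cases n) auto
    ultimately show ?thesis using vanish by (cases "c ^ Suc n < x \<and> x \<le> 1") auto
  qed
qed

lemma hplus_nonneg: "0 \<le> hplus c n x"
  using hplus_nonneg_and_support[of n x] by (cases n) (auto simp: indicator_def)

lemma hplus_eq_0_below: "n \<ge> 1 \<Longrightarrow> x \<le> c ^ n \<Longrightarrow> hplus c n x = 0"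
  using hplus_nonneg_and_support[of n x] by fastforce

lemma hplus_eq_0_above: "n \<ge> 1 \<Longrightarrow> 1 < x \<Longrightarrow> hplus c n x = 0"
  using hplus_nonneg_and_support[of n x] by fastforce

lemma hplus_eq_0_nonpos: "n \<ge> 1 \<Longrightarrow> x \<le> 0 \<Longrightarrow> hplus c n x = 0"
  using hplus_eq_0_below c_power_pos[of n] by simp

lemma integral_hplus_eq_0_above: "m \<ge> 1 \<Longrightarrow> 1 \<le> A \<Longrightarrow> integral {A..B} (hplus c m) = 0"
  using hplus_eq_0_above[of m]
  by (subst integral_spike[where S="{1}" and g="\<lambda>_. 0"]) auto

lemma integral_hplus_eq_0_below: "m \<ge> 1 \<Longrightarrow> B \<le> c ^ m \<Longrightarrow> integral {A..B} (hplus c m) = 0"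
  using hplus_eq_0_below[of m] by (subst integral_cong[where g="\<lambda>_. 0"]) auto

definition primitive :: "nat \<Rightarrow> real \<Rightarrow> real" where
  "primitive n = (\<lambda>y. integral {0..y} (hplus c n))"

lemma hplus_Suc_eq_primitive:
  assumes "n \<ge> 1" "\<And>a b. hplus c n integrable_on {a..b}"
  shows "hplus c (Suc n) x = 2 * (primitive n (x/c) - primitive n x)"
proof (cases "0 < x")
  case True
  then have "integral {0..x} (hplus c n) + integral {x..x/c} (hplus c n) = integral {0..x/c} (hplus c n)"
    using le_divide_c[of x] assms(2) by (intro Henstock_Kurzweil_Integration.integral_combine) auto
  then show ?thesis using True assms(1) by (cases n) (auto simp: primitive_def)
next
  case False
  then have "x < 0 \<and> x / c < 0 \<or> x = 0" using c_pos by (auto simp: divide_neg_pos)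
  then show ?thesis using False assms(1) by (cases n) (auto simp: primitive_def)
qed

lemma primitive_eq_0: "n \<ge> 1 \<Longrightarrow> y \<le> c ^ n \<Longrightarrow> primitive n y = 0"
  unfolding primitive_def by (rule integral_hplus_eq_0_below)

lemma primitive_deriv_0_below:
  assumes "n \<ge> 1" "y < c ^ n"
  shows "(primitive n has_real_derivative 0) (at y)"
  by (rule has_field_derivative_transform_within_open[of "\<lambda>_. 0" _ _ "{..<c^n}"])
    (use assms primitive_eq_0 in auto)

lemma primitive_deriv:
  assumes "n \<ge> 1" "\<And>a b. hplus c n integrable_on {a..b}" "isCont (hplus c n) y"
  shows "(primitive n has_real_derivative hplus c n y) (at y)"
proof (cases "0 < y")
  case True
  have "((\<lambda>t. integral {0..t} (hplus c n)) has_vector_derivative hplus c n y) (at y within {0..y+1})"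
    using True assms by (intro integral_has_vector_derivative_continuous_at[where S="{}", simplified])
      (auto intro: continuous_at_imp_continuous_within)
  moreover have "at y within {0..y+1} = at y"
    using True by (intro at_within_interior) auto
  ultimately show ?thesis
    by (simp add: primitive_def has_real_derivative_iff_has_vector_derivative)
next
  case False
  then show ?thesis
    using primitive_deriv_0_below[OF assms(1)] hplus_eq_0_nonpos[OF assms(1)] c_power_pos[of n] by simp
qed

lemma primitive_isCont:
  assumes "n \<ge> 1" "\<And>a b. hplus c n integrable_on {a..b}"
  shows "isCont (primitive n) y"
proof (cases "0 < y")
  case True
  have "continuous_on {0..y+1} (primitive n)"
    unfolding primitive_def using assms by (intro indefinite_integral_continuous_1) auto
  then show ?thesis using True by (intro continuous_on_interior[of "{0..y+1}"]) auto
next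
  case False
  then show ?thesis
    using c_power_pos[of n] by (intro DERIV_isCont[OF primitive_deriv_0_below[OF assms(1)]]) simp
qed

lemma hplus_integrable_and_isCont:
  assumes "n \<ge> 1"
  shows "(\<forall>a b. hplus c n integrable_on {a..b}) \<and> (n \<ge> 2 \<longrightarrow> (\<forall>x. isCont (hplus c n) x))"
  using assms
proof (induction n rule: dec_induct)
  case base
  then show ?case using integrable_indicator_greaterThanAtMost by simp
next
  case (step n)
  then have I: "\<And>a b. hplus c n integrable_on {a..b}" by blast
  have cont: "isCont (primitive n) y" for y by (rule primitive_isCont[OF step.hyps(1) I])
  have "isCont (\<lambda>x. primitive n (x/c)) x" for x
    using c_pos by (intro isCont_o2[OF _ cont] continuous_intros) auto
  then have "isCont (hplus c (Suc n)) x" for x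
    unfolding hplus_Suc_eq_primitive[OF step.hyps(1) I, abs_def]
    by (intro isCont_mult isCont_diff continuous_const cont)
  then show ?case
    by (auto intro!: integrable_continuous_real continuous_at_imp_continuous_on)
qed

lemma hplus_integrable: "n \<ge> 1 \<Longrightarrow> hplus c n integrable_on {a..b}"
  using hplus_integrable_and_isCont by blast

lemma hplus_isCont: "n \<ge> 2 \<Longrightarrow> isCont (hplus c n) x"
  using hplus_integrable_and_isCont[of n] by simp

lemma hplus_continuous_on: "n \<ge> 2 \<Longrightarrow> continuous_on UNIV (hplus c n)"
  by (simp add: continuous_on_eq_continuous_at hplus_isCont)

lemma hplus_1_isCont:
  assumes "x \<noteq> c" "x \<noteq> 1" shows "isCont (hplus c 1) x"
proof -
  have locally_const: "(hplus c 1 has_real_derivative 0) (at x)"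
    if "open U" "x \<in> U" "\<And>y. y \<in> U \<Longrightarrow> hplus c 1 y = v" for U v
    by (rule has_field_derivative_transform_within_open[of "\<lambda>_. v" _ _ U]) (use that in auto)
  consider "x < c" | "c < x" "x < 1" | "1 < x" using assms by linarith
  then have "(hplus c 1 has_real_derivative 0) (at x)"
  proof cases
    case 1 then show ?thesis by (intro locally_const[of "{..<c}" 0]) (auto simp: indicator_def)
  next
    case 2 then show ?thesis by (intro locally_const[of "{c<..<1}" 1]) (auto simp: indicator_def)
  next
    case 3 then show ?thesis by (intro locally_const[of "{1<..}" 0]) (auto simp: indicator_def)
  qed
  then show ?thesis by (rule DERIV_isCont)
qed

lemma hplus_Suc_deriv:
  assumes "n \<ge> 1" "isCont (hplus c n) x" "isCont (hplus c n) (x/c)"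
  shows "(hplus c (Suc n) has_real_derivative 2 * (hplus c n (x/c) / c - hplus c n x)) (at x)"
proof -
  have I: "\<And>a b. hplus c n integrable_on {a..b}" using hplus_integrable assms(1) by blast
  have "((\<lambda>x. x/c) has_real_derivative 1/c) (at x)"
    using c_pos by (auto intro!: derivative_eq_intros)
  from DERIV_chain2[OF primitive_deriv[OF assms(1) I assms(3)] this]
  have "((\<lambda>x. primitive n (x/c)) has_real_derivative hplus c n (x/c) * (1/c)) (at x)" .
  from DERIV_cmult[OF DERIV_diff[OF this primitive_deriv[OF assms(1) I assms(2)]], of 2]
  show ?thesis
    unfolding hplus_Suc_eq_primitive[OF assms(1) I, abs_def] by simp
qed

lemma hplus_Suc_deriv_off_knots:
  assumes "m \<ge> 1" "t \<notin> {c, 1, c * c}"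
  shows "(hplus c (Suc m) has_real_derivative 2 * (hplus c m (t/c) / c - hplus c m t)) (at t)"
proof (rule hplus_Suc_deriv[OF assms(1)])
  have "t / c \<noteq> c" "t / c \<noteq> 1" using assms(2) c_pos by (auto simp: divide_simps)
  moreover have "m = 1 \<or> m \<ge> 2" using assms(1) by linarith
  ultimately show "isCont (hplus c m) t" "isCont (hplus c m) (t/c)"
    using assms hplus_isCont[of m] hplus_1_isCont by auto
qed

lemma hplus_Ck: "n \<ge> 2 \<Longrightarrow> Ck (n - 2) (hplus c n)"
proof (induction n rule: dec_induct)
  case base
  show ?case using hplus_continuous_on[of 2] by (simp add: Ck_0)
next
  case (step n)
  have "(hplus c (Suc n) has_real_derivative 2/c * hplus c n ((1/c) * x) + (-2) * hplus c n x) (at x)" for x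
    using hplus_Suc_deriv[of n x] hplus_isCont[OF step.hyps(1)] step.hyps by (simp add: algebra_simps)
  moreover have "Ck (n - 2) (\<lambda>x. 2/c * hplus c n ((1/c) * x) + (-2) * hplus c n x)"
    by (intro Ck_add Ck_cmult Ck_compose_scale step.IH)
  ultimately have "Ck (Suc (n - 2)) (hplus c (Suc n))" by (rule Ck_Suc_of_deriv)
  moreover have "Suc (n - 2) = Suc n - 2" using step.hyps(1) by simp
  ultimately show ?case by simp
qed

section \<open>The operator K on even functions\<close>

lemma indicator_Sset_divide_abs:
  "(indicator (Sset c) (\<gamma> / \<bar>t\<bar>) :: real) = indicator {t. \<bar>\<gamma>\<bar> \<le> \<bar>t\<bar> \<and> \<bar>t\<bar> < \<bar>\<gamma>\<bar>/c} t"
proof (cases "t = 0")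
  case True then show ?thesis using c_pos c_less_1 by (auto simp: indicator_def Sset_def)
next
  case False
  then have "c < \<bar>\<gamma>\<bar> / \<bar>t\<bar> \<longleftrightarrow> \<bar>t\<bar> < \<bar>\<gamma>\<bar> / c" "\<bar>\<gamma>\<bar> / \<bar>t\<bar> \<le> 1 \<longleftrightarrow> \<bar>\<gamma>\<bar> \<le> \<bar>t\<bar>"
    using c_pos by (simp_all add: pos_less_divide_eq mult.commute)
  moreover have "x \<in> Sset c \<longleftrightarrow> c < \<bar>x\<bar> \<and> \<bar>x\<bar> \<le> 1" for x
    using c_pos by (auto simp: Sset_def)
  ultimately show ?thesis by (auto simp: indicator_def)
qed

lemma hplus_set_integrable:
  assumes "n \<ge> 1" shows "set_integrable lborel {a..b} (hplus c n)"
proof (cases "n \<ge> 2")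
  case True
  then show ?thesis
    by (intro borel_integrable_atLeastAtMost' continuous_on_subset[OF hplus_continuous_on]) auto
next
  case False
  then have "n = 1" using assms by simp
  then have eq: "(\<lambda>x. indicator {a..b} x *\<^sub>R hplus c n x) = indicator ({a..b} \<inter> {c<..1})"
    by (auto simp: indicator_def)
  have "emeasure lborel ({a..b} \<inter> {c<..1}) \<le> emeasure lborel {a..b}"
    by (intro emeasure_mono) auto
  also have "\<dots> < \<infinity>" by (cases "a \<le> b") auto
  finally show ?thesis
    unfolding set_integrable_def eq by (intro integrable_real_indicator) auto
qed

lemma Kop_integrand_split:
  fixes \<gamma> t :: real
  assumes "n \<ge> 1"
  defines "I \<equiv> {\<bar>\<gamma>\<bar>..<\<bar>\<gamma>\<bar>/c}"
  shows "(hplus c n t + hplus c n (-t)) * indicator (Sset c) (\<gamma> / \<bar>t\<bar>)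
       = indicator I t *\<^sub>R hplus c n t + indicator I (-t) *\<^sub>R hplus c n (-t)"
  using hplus_eq_0_nonpos[OF assms(1), of t] hplus_eq_0_nonpos[OF assms(1), of "-t"]
  unfolding indicator_Sset_divide_abs I_def by (cases "t > 0") (auto simp: indicator_def)

lemma Kop_hplus_sym:
  assumes "n \<ge> 1"
  shows "Kop c (\<lambda>t. hplus c n t + hplus c n (-t)) \<gamma> = 2 * integral {\<bar>\<gamma>\<bar>..\<bar>\<gamma>\<bar>/c} (hplus c n)"
proof -
  define g where "g t = indicator {\<bar>\<gamma>\<bar>..<\<bar>\<gamma>\<bar>/c} t *\<^sub>R hplus c n t" for t
  have "set_integrable lborel {\<bar>\<gamma>\<bar>..<\<bar>\<gamma>\<bar>/c} (hplus c n)"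
    by (rule set_integrable_subset[OF hplus_set_integrable[OF assms, of "\<bar>\<gamma>\<bar>" "\<bar>\<gamma>\<bar>/c"]]) auto
  then have "integrable lborel g" unfolding g_def set_integrable_def .
  then have "Kop c (\<lambda>t. hplus c n t + hplus c n (-t)) \<gamma> = 2 * (\<integral>t. g t \<partial>lborel)"
    unfolding Kop_def Kop_integrand_split[OF assms] g_def[symmetric]
    by (rule lborel_integral_add_reflect)
  also have "(\<integral>t. g t \<partial>lborel) = integral {\<bar>\<gamma>\<bar>..\<bar>\<gamma>\<bar>/c} (hplus c n)"
    unfolding g_def by (rule lborel_integral_indicator_atLeastLessThan[OF hplus_set_integrable[OF assms]])
  finally show ?thesis .
qed

lemma hplus_Suc_sym:
  assumes "n \<ge> 1"
  shows "hplus c (Suc n) x + hplus c (Suc n) (-x) = 2 * integral {\<bar>x\<bar>..\<bar>x\<bar>/c} (hplus c n)"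
  using assms by (cases n; cases "x > 0"; cases "x = 0") auto

lemma hseq_eq_hplus: "n \<ge> 1 \<Longrightarrow> hseq c n x = hplus c n x + hplus c n (-x)"
proof (induction n arbitrary: x rule: dec_induct)
  case base
  then show ?case using c_pos c_less_1 by (auto simp: indicator_def Sset_def)
next
  case (step n)
  have "hseq c n = (\<lambda>t. hplus c n t + hplus c n (-t))" using step.IH by auto
  moreover have "hseq c (Suc n) x = Kop c (hseq c n) x" using step.hyps by (cases n) auto
  ultimately show ?case using Kop_hplus_sym[OF step.hyps(1)] hplus_Suc_sym[OF step.hyps(1)] by simp
qed

lemma hseq_nonneg: "n \<ge> 1 \<Longrightarrow> 0 \<le> hseq c n x"
  by (simp add: hseq_eq_hplus hplus_nonneg)

lemma hseq_even: "n \<ge> 1 \<Longrightarrow> hseq c n (-x) = hseq c n x"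
  by (simp add: hseq_eq_hplus)

lemma hseq_Ck: "n \<ge> 2 \<Longrightarrow> Ck (n - 2) (hseq c n)"
proof -
  assume n: "n \<ge> 2"
  then have "hseq c n = (\<lambda>x. hplus c n x + hplus c n ((-1) * x))"
    by (auto simp: hseq_eq_hplus)
  then show ?thesis by (simp only:) (intro Ck_add Ck_compose_scale hplus_Ck n)
qed

section \<open>Support, positivity and the integrals Q_n\<close>

lemma integral_hplus_pos:
  assumes n: "n \<ge> 1" and pq: "p < q" and pos: "\<And>x. p < x \<Longrightarrow> x < q \<Longrightarrow> 0 < hplus c n x"
  shows "integral {p..q} (hplus c n) > 0"
proof (cases "n \<ge> 2")
  case True
  have cont: "continuous_on (cbox p q) (hplus c n)"
    using hplus_continuous_on[OF True] by (rule continuous_on_subset) auto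
  have "integral (cbox p q) (hplus c n) \<noteq> 0"
    using integral_cbox_eq_0_iff[OF cont] hplus_nonneg pq pos[of "(p+q)/2"] by fastforce
  moreover have "integral (cbox p q) (hplus c n) \<ge> 0"
    using hplus_nonneg integrable_continuous[OF cont] by (intro integral_nonneg) auto
  ultimately show ?thesis by simp
next
  case False
  then have "n = 1" using n by simp
  have "integral {p..q} (hplus c n) = integral {p..q} (\<lambda>_. 1::real)"
  proof (rule integral_spike[where S="{p,q}"])
    fix x assume "x \<in> {p..q} - {p,q}"
    then show "1 = hplus c n x" using pos[of x] \<open>n = 1\<close> by (auto simp: indicator_def split: if_splits)
  qed simp
  then show ?thesis using pq by simp
qed

lemma hplus_pos: "n \<ge> 1 \<Longrightarrow> c ^ n < x \<Longrightarrow> x < 1 \<Longrightarrow> 0 < hplus c n x"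
proof (induction n arbitrary: x rule: dec_induct)
  case base
  then show ?case by (simp add: indicator_def)
next
  case (step m)
  have xp: "0 < x" using step.prems c_power_pos[of "Suc m"] by linarith
  define p where "p = max x (c ^ m)"
  define q where "q = min (x / c) 1"
  have "c ^ m < x / c"
    using step.prems(1) c_pos by (simp add: pos_less_divide_eq mult.commute)
  moreover have "x < x / c" using xp c_pos c_less_1 by (simp add: pos_less_divide_eq)
  ultimately have "p < q" unfolding p_def q_def using step.prems(2) c_power_less_1[OF step.hyps(1)] by simp
  then have "0 < integral {p..q} (hplus c m)"
    by (intro integral_hplus_pos[OF step.hyps(1)] step.IH) (auto simp: p_def q_def)
  also have "\<dots> \<le> integral {x..x/c} (hplus c m)"
    by (rule integral_subset_le) (auto simp: p_def q_def hplus_integrable[OF step.hyps(1)] hplus_nonneg)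
  finally show ?case using xp step.hyps by (cases m) auto
qed

lemma hseq_pos:
  assumes "n \<ge> 1" "x \<in> {-1<..<-(c ^ n)} \<union> {c ^ n<..<1}"
  shows "0 < hseq c n x"
  using assms hplus_pos[OF assms(1), of x] hplus_pos[OF assms(1), of "-x"]
    hplus_nonneg[of n x] hplus_nonneg[of n "-x"]
  by (auto simp: hseq_eq_hplus add_pos_nonneg add_nonneg_pos)

lemma hseq_closure_support:
  assumes n: "n \<ge> 1"
  shows "closure {x. hseq c n x \<noteq> 0} = {-1..-(c ^ n)} \<union> {c ^ n..1}"
proof
  have "x \<in> {-1..-(c ^ n)} \<union> {c ^ n..1}" if "hseq c n x \<noteq> 0" for x
    using that hplus_nonneg_and_support[OF n, of x] hplus_nonneg_and_support[OF n, of "-x"]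
    by (auto simp: hseq_eq_hplus[OF n])
  then have "{x. hseq c n x \<noteq> 0} \<subseteq> {-1..-(c ^ n)} \<union> {c ^ n..1}" by blast
  then show "closure {x. hseq c n x \<noteq> 0} \<subseteq> {-1..-(c ^ n)} \<union> {c ^ n..1}"
    by (simp add: closure_minimal closed_Un)
next
  have "{-1<..<-(c ^ n)} \<union> {c ^ n<..<1} \<subseteq> {x. hseq c n x \<noteq> 0}"
    using hseq_pos[OF n] by force
  then have "closure ({-1<..<-(c ^ n)} \<union> {c ^ n<..<1}) \<subseteq> closure {x. hseq c n x \<noteq> 0}"
    by (rule closure_mono)
  then show "{-1..-(c ^ n)} \<union> {c ^ n..1} \<subseteq> closure {x. hseq c n x \<noteq> 0}"
    using c_power_less_1[OF n] by simp
qed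

lemma Qn_eq_integral_hplus:
  assumes "n \<ge> 1"
  shows "Qn c n = 2 * integral {0..1} (hplus c n)"
proof -
  have set_int: "set_integrable lborel {0..1} (hplus c n)" by (rule hplus_set_integrable[OF assms])
  have supp: "hplus c n = (\<lambda>x. indicator {0..1} x *\<^sub>R hplus c n x)"
  proof
    fix x
    show "hplus c n x = indicator {0..1} x *\<^sub>R hplus c n x"
      using hplus_eq_0_nonpos[OF assms, of x] hplus_eq_0_above[OF assms, of x]
      by (cases "x \<in> {0..1}") auto
  qed
  then have "integrable lborel (hplus c n)" using set_int unfolding set_integrable_def by simp
  then have "Qn c n = 2 * (\<integral>t. hplus c n t \<partial>lborel)"
    unfolding Qn_def hseq_eq_hplus[OF assms] by (rule lborel_integral_add_reflect)
  also have "(\<integral>t. hplus c n t \<partial>lborel) = integral {0..1} (hplus c n)"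
    using set_borel_integral_eq_integral(2)[OF set_int] supp
    unfolding set_lebesgue_integral_def by simp
  finally show ?thesis .
qed

lemma Qn_1: "Qn c 1 = 2 * (1 - c)"
  using Qn_eq_integral_hplus[of 1] integral_indicator_greaterThanAtMost[of 0 1 c 1] c_pos c_less_1 by simp

lemma Qn_pos: "n \<ge> 1 \<Longrightarrow> Qn c n > 0"
proof -
  assume n: "n \<ge> 1"
  have "0 < integral {c^n..1} (hplus c n)"
    using integral_hplus_pos[OF n c_power_less_1[OF n]] hplus_pos[OF n] by blast
  also have "\<dots> \<le> integral {0..1} (hplus c n)"
    using c_power_pos[of n] by (intro integral_subset_le) (auto simp: hplus_integrable[OF n] hplus_nonneg)
  finally show ?thesis using Qn_eq_integral_hplus[OF n] by simp
qed

section \<open>The recurrence\<close>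

lemma hplus_recurrence_base:
  "hplus c 2 x = 2 * ((1 - x) * hplus c 1 x + (x / c - c) * hplus c 1 (x / c))"
proof (cases "0 < x")
  case False
  then have "x / c \<le> 0" using c_pos by (simp add: divide_nonpos_pos)
  then show ?thesis using False c_pos by (simp add: numeral_2_eq_2 indicator_def)
next
  case True
  have "x / c \<le> c \<longleftrightarrow> x \<le> c * c" "x / c \<le> 1 \<longleftrightarrow> x \<le> c" "c < x / c \<longleftrightarrow> c * c < x"
    using c_pos by (simp_all add: pos_divide_le_eq pos_less_divide_eq)
  moreover have "c * c < c" using c_pos c_less_1 by simp
  moreover have "hplus c 2 x = 2 * integral {x..x/c} (hplus c 1)"
    using True by (simp add: numeral_2_eq_2)
  ultimately show ?thesis
    using le_divide_c[of x] True
    by (cases "x \<le> c * c"; cases "x \<le> c"; cases "x \<le> 1") (auto simp: integral_indicator_greaterThanAtMost indicator_def)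
qed

lemma has_integral_deriv_id_times_hplus:
  assumes m: "m \<ge> 1" and x: "0 < x"
  shows "((\<lambda>t. hplus c (Suc m) t + t * (2 * (hplus c m (t/c) / c - hplus c m t))) has_integral
           (x/c * hplus c (Suc m) (x/c) - x * hplus c (Suc m) x)) {x..x/c}"
proof (rule fundamental_theorem_of_calculus_interior_strong[of "{c, 1, c*c}"])
  show "finite {c, 1, c * c}" "x \<le> x / c" using le_divide_c[of x] x by auto
  show "continuous_on {x..x/c} (\<lambda>t. t * hplus c (Suc m) t)"
    using m by (intro continuous_on_mult continuous_on_id continuous_on_subset[OF hplus_continuous_on]) auto
  fix t assume "t \<in> {x<..<x/c} - {c, 1, c * c}"
  then have "(hplus c (Suc m) has_real_derivative 2 * (hplus c m (t/c) / c - hplus c m t)) (at t)"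
    by (intro hplus_Suc_deriv_off_knots[OF m]) auto
  from DERIV_mult[OF DERIV_ident this]
  have "((\<lambda>t. t * hplus c (Suc m) t) has_real_derivative
          hplus c (Suc m) t + t * (2 * (hplus c m (t/c) / c - hplus c m t))) (at t)"
    by (rule DERIV_cong) simp
  then show "((\<lambda>t. t * hplus c (Suc m) t) has_vector_derivative
          hplus c (Suc m) t + t * (2 * (hplus c m (t/c) / c - hplus c m t))) (at t)"
    by (simp add: has_real_derivative_iff_has_vector_derivative)
qed

(* Integrate (t u_(m+1)(t))' = u_(m+1)(t) + t u_(m+1)'(t) over [x, x/c]: by the induction
   hypothesis the integrand is (m+1) u_(m+1) up to multiples of u_m(t) and u_m(t/c), whose
   integrals over [x, x/c] are again values of u_(m+1). *)
lemma hplus_recurrence_step: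
  assumes m: "m \<ge> 1" and x: "0 < x"
    and IH: "\<And>t. real m * hplus c (Suc m) t = 2 * ((1 - t) * hplus c m t + (t / c - c ^ m) * hplus c m (t / c))"
  defines "g \<equiv> hplus c (Suc m)" and "f \<equiv> hplus c m"
  shows "real (Suc m) * hplus c (Suc (Suc m)) x = 2 * ((1 - x) * g x + (x / c - c ^ Suc m) * g (x / c))"
proof -
  have f_int: "(f has_integral g y / 2) {y..y/c}" if "0 < y" for y
    using integrable_integral[OF hplus_integrable[OF m, of y "y/c"]] that m
    unfolding f_def g_def by (cases m) auto
  have "((\<lambda>t. f (t/c)) has_integral c * (g (x/c) / 2)) {c * (x/c)..c * (x/c/c)}"
    using f_int[of "x/c"] x c_pos by (intro has_integral_dilate) auto
  then have f_dilate_int: "((\<lambda>t. f (t/c)) has_integral c * (g (x/c) / 2)) {x..x/c}"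
    using c_pos by simp
  have "((\<lambda>t. (g t + t * (2 * (f (t/c) / c - f t))) + 2 * f t - 2 * c ^ m * f (t/c)) has_integral
      (x/c * g (x/c) - x * g x) + 2 * (g x / 2) - 2 * c ^ m * (c * (g (x/c) / 2))) {x..x/c}"
    using has_integral_deriv_id_times_hplus[OF m x] f_int[OF x] f_dilate_int
    unfolding f_def g_def by (intro has_integral_diff has_integral_add has_integral_mult_right)
  moreover have "(\<lambda>t. (g t + t * (2 * (f (t/c) / c - f t))) + 2 * f t - 2 * c ^ m * f (t/c))
      = (\<lambda>t. real (Suc m) * g t)"
    using IH c_pos unfolding f_def g_def by (simp add: fun_eq_iff field_simps)
  ultimately have "((\<lambda>t. real (Suc m) * g t) has_integral
      (x/c * g (x/c) - x * g x) + 2 * (g x / 2) - 2 * c ^ m * (c * (g (x/c) / 2))) {x..x/c}"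
    by simp
  moreover have "((\<lambda>t. real (Suc m) * g t) has_integral (real (Suc m) * integral {x..x/c} g)) {x..x/c}"
    unfolding g_def by (intro has_integral_mult_right integrable_integral hplus_integrable) simp
  ultimately have integral_eq: "real (Suc m) * integral {x..x/c} g
      = (x/c * g (x/c) - x * g x) + 2 * (g x / 2) - 2 * c ^ m * (c * (g (x/c) / 2))"
    by (rule has_integral_unique[rotated])
  have "real (Suc m) * hplus c (Suc (Suc m)) x = 2 * (real (Suc m) * integral {x..x/c} g)"
    using x by (simp add: g_def)
  also have "\<dots> = 2 * ((1 - x) * g x + (x / c - c ^ Suc m) * g (x / c))"
    unfolding integral_eq by (simp add: algebra_simps)
  finally show ?thesis .
qed

lemma hplus_recurrence:
  "m \<ge> 1 \<Longrightarrow> real m * hplus c (Suc m) x = 2 * ((1 - x) * hplus c m x + (x / c - c ^ m) * hplus c m (x / c))"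
proof (induction m arbitrary: x rule: dec_induct)
  case base
  show ?case using hplus_recurrence_base[of x] by (simp add: numeral_2_eq_2)
next
  case (step m)
  show ?case
  proof (cases "0 < x")
    case True
    then show ?thesis using hplus_recurrence_step[OF step.hyps(1) True step.IH] by simp
  next
    case False
    then have "x / c \<le> 0" using c_pos by (simp add: divide_nonpos_pos)
    then show ?thesis using False step.hyps hplus_eq_0_nonpos[of "Suc m"] hplus_eq_0_nonpos[of "Suc (Suc m)"]
      by simp
  qed
qed

lemma hseq_recurrence:
  assumes "n \<ge> 2"
  shows "hseq c n \<gamma> = 2 / (real n - 1) *
           ((1 - \<bar>\<gamma>\<bar>) * hseq c (n - 1) \<gamma> + (\<bar>\<gamma>\<bar> / c - c ^ (n - 1)) * hseq c (n - 1) (\<gamma> / c))"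
proof -
  obtain m where n: "n = Suc m" and m: "m \<ge> 1" using assms by (cases n) auto
  have "real m * hseq c (Suc m) x = 2 * ((1 - x) * hseq c m x + (x / c - c ^ m) * hseq c m (x / c))"
    if "0 \<le> x" for x
  proof -
    have "0 \<le> x / c" using that c_pos by simp
    then show ?thesis
      using hplus_recurrence[OF m, of x] that m
        hplus_eq_0_nonpos[of "Suc m" "-x"] hplus_eq_0_nonpos[of m "-x"] hplus_eq_0_nonpos[of m "-(x/c)"]
      by (simp add: hseq_eq_hplus)
  qed
  from this[of "\<bar>\<gamma>\<bar>"] have "real m * hseq c (Suc m) \<gamma> = 2 * ((1 - \<bar>\<gamma>\<bar>) * hseq c m \<gamma> + (\<bar>\<gamma>\<bar> / c - c ^ m) * hseq c m (\<gamma> / c))"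
    using hseq_even[OF m, of \<gamma>] hseq_even[OF m, of "\<gamma> / c"] hseq_even[of "Suc m" \<gamma>] m
    by (cases "0 \<le> \<gamma>") (auto simp: abs_if)
  then show ?thesis using m by (simp add: n field_simps)
qed

section \<open>Splines\<close>

lemma hplus_spline:
  "n \<ge> 1 \<Longrightarrow> a < b \<Longrightarrow> {a<..<b} \<inter> {y. \<exists>k\<le>n. y = c ^ k} = {} \<Longrightarrow>
     \<exists>p. \<forall>x\<in>{a<..<b}. hplus c n x = poly p x"
proof (induction n arbitrary: a b rule: dec_induct)
  case base
  have knots: "c \<in> {y. \<exists>k\<le>1. y = c ^ k}" "1 \<in> {y. \<exists>k\<le>1. y = c ^ k}"
    by (intro CollectI exI[of _ 1]; simp) (intro CollectI exI[of _ 0]; simp)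
  have "\<not> (a < c \<and> c < b)" "\<not> (a < 1 \<and> 1 < b)"
    using base.prems(2) knots by (metis IntI empty_iff greaterThanLessThan_iff)+
  then consider "b \<le> c" | "c \<le> a" "b \<le> 1" | "1 \<le> a" using base.prems(1) by linarith
  then show ?case
  proof cases
    case 2
    then show ?thesis by (intro exI[of _ "[:1:]"]) (auto simp: indicator_def)
  qed (auto intro!: exI[of _ 0] simp: indicator_def)
next
  case (step n)
  have "{a<..<b} \<inter> {y. \<exists>k\<le>n. y = c ^ k} = {}" using step.prems(2) by (auto dest: le_SucI)
  then obtain p where p: "\<forall>x\<in>{a<..<b}. hplus c n x = poly p x" using step.IH step.prems(1) by blast
  have "{a/c<..<b/c} \<inter> {y. \<exists>k\<le>n. y = c ^ k} = {}"
  proof (rule ccontr)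
    assume "{a/c<..<b/c} \<inter> {y. \<exists>k\<le>n. y = c ^ k} \<noteq> {}"
    then obtain k where "k \<le> n" "a/c < c ^ k" "c ^ k < b/c" by auto
    then have "Suc k \<le> Suc n" "c ^ Suc k \<in> {a<..<b}"
      using c_pos by (auto simp: divide_less_eq less_divide_eq mult.commute)
    then show False using step.prems(2) by blast
  qed
  moreover have "a / c < b / c" using step.prems(1) c_pos by (simp add: divide_strict_right_mono)
  ultimately obtain q where q: "\<forall>x\<in>{a/c<..<b/c}. hplus c n x = poly q x" using step.IH by blast
  have "hplus c (Suc n) x = poly (smult (2 / real n) ([:1, -1:] * p + [:-(c ^ n), 1/c:] * pcompose q [:0, 1/c:])) x"
    if "x \<in> {a<..<b}" for x
  proof -
    have "x / c \<in> {a/c<..<b/c}" using that c_pos by (auto simp: divide_strict_right_mono)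
    then show ?thesis
      using hplus_recurrence[OF step.hyps(1), of x] p q that step.hyps
      by (simp add: poly_pcompose field_simps)
  qed
  then show ?case by blast
qed

lemma hseq_spline: "n \<ge> 1 \<Longrightarrow> spline_with_knots (knots c n) (hseq c n)"
  unfolding spline_with_knots_def
proof (intro allI impI)
  fix a b :: real assume n: "n \<ge> 1" and ab: "a < b \<and> {a<..<b} \<inter> knots c n = {}"
  then have "{a<..<b} \<inter> {y. \<exists>k\<le>n. y = c ^ k} = {}" "{-b<..<-a} \<inter> {y. \<exists>k\<le>n. y = c ^ k} = {}"
    by (auto simp: knots_def disjoint_iff) (metis minus_less_iff neg_less_iff_less)
  moreover have "a < b" "-b < -a" using ab by simp_all
  ultimately obtain p q where "\<forall>x\<in>{a<..<b}. hplus c n x = poly p x" "\<forall>x\<in>{-b<..<-a}. hplus c n x = poly q x"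
    using hplus_spline[OF n, of a b] hplus_spline[OF n, of "-b" "-a"] by presburger
  then have "\<forall>x\<in>{a<..<b}. hseq c n x = poly (p + pcompose q [:0, -1:]) x"
    by (simp add: hseq_eq_hplus[OF n] poly_pcompose)
  then show "\<exists>P::real poly. \<forall>x\<in>{a<..<b}. hseq c n x = poly P x" by blast
qed

section \<open>Dilation sums\<close>

lemma integral_hplus_eq_core:
  assumes m: "m \<ge> 1" and "A \<le> c ^ m" "1 \<le> B"
  shows "integral {A..B} (hplus c m) = integral {c ^ m..1} (hplus c m)"
proof -
  have "integral {A..c^m} (hplus c m) + integral {c^m..B} (hplus c m) = integral {A..B} (hplus c m)"
    "integral {c^m..1} (hplus c m) + integral {1..B} (hplus c m) = integral {c^m..B} (hplus c m)"
    using assms c_power_le_1[of m]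
    by (intro Henstock_Kurzweil_Integration.integral_combine hplus_integrable[OF m]; simp)+
  then show ?thesis
    using integral_hplus_eq_0_below[OF m, of "c^m"] integral_hplus_eq_0_above[OF m, of 1] by simp
qed

lemma hseq_dilate:
  assumes m: "m \<ge> 1"
  shows "hseq c (Suc m) (c powi j * \<gamma>) = 2 * integral {c powi j * \<bar>\<gamma>\<bar> .. c powi (j - 1) * \<bar>\<gamma>\<bar>} (hplus c m)"
proof -
  have "\<bar>c powi j * \<gamma>\<bar> = c powi j * \<bar>\<gamma>\<bar>" "c powi j * \<bar>\<gamma>\<bar> / c = c powi (j - 1) * \<bar>\<gamma>\<bar>"
    using c_pos by (simp_all add: abs_mult power_int_diff)
  then show ?thesis using hseq_eq_hplus[of "Suc m"] hplus_Suc_sym[OF m, of "c powi j * \<gamma>"] by simp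
qed

lemma hseq_dilate_eq_0:
  assumes "m \<ge> 1" "1 \<le> c powi j * \<bar>\<gamma>\<bar> \<or> c powi (j - 1) * \<bar>\<gamma>\<bar> \<le> c ^ m"
  shows "hseq c (Suc m) (c powi j * \<gamma>) = 0"
  using assms integral_hplus_eq_0_above integral_hplus_eq_0_below by (auto simp: hseq_dilate)

lemma integral_telescope:
  assumes m: "m \<ge> 1" and a: "0 < a" and lohi: "lo - 1 \<le> hi"
  shows "(\<Sum>j\<in>{lo..hi}. integral {c powi j * a .. c powi (j - 1) * a} (hplus c m))
       = integral {c powi hi * a .. c powi (lo - 1) * a} (hplus c m)"
  using lohi
proof (induction hi rule: int_ge_induct)
  case (step i)
  have "{lo..i+1} = insert (i+1) {lo..i}" using step.hyps by auto
  moreover have "c powi (i + 1) * a \<le> c powi i * a" "c powi i * a \<le> c powi (lo - 1) * a"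
    using c_power_int_antimono[of i "i+1"] c_power_int_antimono[of "lo - 1" i] a step.hyps by simp_all
  ultimately show ?case
    using step.IH Henstock_Kurzweil_Integration.integral_combine[OF _ _ hplus_integrable[OF m]] by simp
qed simp

lemma dilation_window:
  assumes "0 < a"
  obtains lo hi where "lo - 1 \<le> hi" "c powi hi * a \<le> c ^ m" "1 \<le> c powi (lo - 1) * a"
proof -
  obtain N1 where N1: "c ^ N1 < c ^ m / a"
    using real_arch_pow_inv[of "c ^ m / a" c] assms c_power_pos c_less_1 by auto
  obtain N2 where N2: "c ^ N2 < a" using real_arch_pow_inv[OF assms c_less_1] by blast
  define lo where "lo = 1 - int N2"
  define hi where "hi = max (int N1) (lo - 1)"
  have "c powi hi * a \<le> c ^ N1 * a"
    using c_power_int_antimono[of "int N1" hi] assms by (simp add: hi_def mult_right_mono)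
  also have "\<dots> \<le> c ^ m" using N1 assms by (simp add: pos_less_divide_eq)
  finally have "c powi hi * a \<le> c ^ m" .
  moreover have "1 \<le> c powi (lo - 1) * a"
    using N2 c_power_pos[of N2] by (simp add: lo_def power_int_minus field_simps)
  ultimately show ?thesis by (intro that) (auto simp: hi_def)
qed

lemma hseq_dilation_sum:
  assumes m: "m \<ge> 1" and "\<gamma> \<noteq> 0"
  shows "\<exists>lo hi. (\<forall>j. j \<notin> {lo..hi} \<longrightarrow> hseq c (Suc m) (c powi j * \<gamma>) = 0)
    \<and> (\<Sum>j\<in>{lo..hi}. hseq c (Suc m) (c powi j * \<gamma>)) = Qn c m"
proof -
  have a: "0 < \<bar>\<gamma>\<bar>" using assms by simp
  obtain lo hi where lohi: "lo - 1 \<le> hi" and hi: "c powi hi * \<bar>\<gamma>\<bar> \<le> c ^ m"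
    and lo: "1 \<le> c powi (lo - 1) * \<bar>\<gamma>\<bar>" using dilation_window[OF a] .
  have vanish: "hseq c (Suc m) (c powi j * \<gamma>) = 0" if "j \<notin> {lo..hi}" for j
  proof (cases "j < lo")
    case True
    then have "c powi (lo - 1) * \<bar>\<gamma>\<bar> \<le> c powi j * \<bar>\<gamma>\<bar>"
      using c_power_int_antimono[of j "lo - 1"] by (simp add: mult_right_mono)
    then show ?thesis using lo hseq_dilate_eq_0[OF m] by simp
  next
    case False
    then have "c powi (j - 1) * \<bar>\<gamma>\<bar> \<le> c powi hi * \<bar>\<gamma>\<bar>"
      using that c_power_int_antimono[of hi "j - 1"] by (simp add: mult_right_mono)
    then show ?thesis using hi hseq_dilate_eq_0[OF m] by simp
  qed
  have "(\<Sum>j\<in>{lo..hi}. hseq c (Suc m) (c powi j * \<gamma>))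
      = 2 * integral {c powi hi * \<bar>\<gamma>\<bar> .. c powi (lo - 1) * \<bar>\<gamma>\<bar>} (hplus c m)"
    by (simp add: hseq_dilate[OF m] sum_distrib_left[symmetric] integral_telescope[OF m a lohi])
  also have "\<dots> = Qn c m"
    using Qn_eq_integral_hplus[OF m] integral_hplus_eq_core[OF m hi lo]
      integral_hplus_eq_core[OF m, of 0 1] c_power_pos[of m] by simp
  finally show ?thesis using vanish by blast
qed

lemma hseq_dilate_nonzero_diff_le:
  assumes m: "m \<ge> 1"
    and "hseq c (Suc m) (c powi j * \<gamma>) \<noteq> 0" "hseq c (Suc m) (c powi k * \<gamma>) \<noteq> 0"
  shows "k - j \<le> int m"
proof (rule ccontr)
  assume "\<not> k - j \<le> int m"
  then have "c powi (k - 1 - j) \<le> c powi (int m)" by (intro c_power_int_antimono) simp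
  moreover have "c ^ m < c powi (k - 1) * \<bar>\<gamma>\<bar>" "c powi j * \<bar>\<gamma>\<bar> < 1"
    using assms(2,3) hseq_dilate_eq_0[OF m, of j \<gamma>] hseq_dilate_eq_0[OF m, of k \<gamma>] by linarith+
  moreover have "c powi (k - 1) * \<bar>\<gamma>\<bar> = c powi (k - 1 - j) * (c powi j * \<bar>\<gamma>\<bar>)"
    using c_pos power_int_add[of c "k - 1 - j" j] by simp
  moreover have "c powi (k - 1 - j) * (c powi j * \<bar>\<gamma>\<bar>) \<le> c powi (k - 1 - j)"
    using \<open>c powi j * \<bar>\<gamma>\<bar> < 1\<close> c_pos by (intro mult_right_le_one_le) auto
  ultimately show False by simp
qed

lemma infsum_hseq_dilates:
  assumes m: "m \<ge> 1" and "\<gamma> \<noteq> 0"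
  shows "(\<Sum>\<^sub>\<infinity>j::int. hseq c (Suc m) (c powi j * \<gamma>)) = Qn c m"
proof -
  obtain lo hi where "\<forall>j. j \<notin> {lo..hi} \<longrightarrow> hseq c (Suc m) (c powi j * \<gamma>) = 0"
    and "(\<Sum>j\<in>{lo..hi}. hseq c (Suc m) (c powi j * \<gamma>)) = Qn c m"
    using hseq_dilation_sum[OF assms] by blast
  then show ?thesis by (subst infsum_eq_sum_if_vanishing_outside[of "{lo..hi}"]) auto
qed

lemma infsum_hseq_dilates_squared_bounds:
  assumes m: "m \<ge> 1" and "\<gamma> \<noteq> 0"
  defines "x \<equiv> \<lambda>j. hseq c (Suc m) (c powi j * \<gamma>)"
  shows "(Qn c m)\<^sup>2 \<le> real (m + 1) * (\<Sum>\<^sub>\<infinity>j::int. \<bar>x j\<bar>\<^sup>2)"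
    and "(\<Sum>\<^sub>\<infinity>j::int. \<bar>x j\<bar>\<^sup>2) \<le> (Qn c m)\<^sup>2"
proof -
  define J where "J = {j. x j \<noteq> 0}"
  obtain lo hi where "\<forall>j. j \<notin> {lo..hi} \<longrightarrow> x j = 0" and sum: "(\<Sum>j\<in>{lo..hi}. x j) = Qn c m"
    using hseq_dilation_sum[OF assms(1,2)] unfolding x_def by blast
  then have sub: "J \<subseteq> {lo..hi}" by (auto simp: J_def)
  then have fin: "finite J" by (rule finite_subset) simp
  have sum_J: "(\<Sum>j\<in>J. x j) = Qn c m"
    using sum.mono_neutral_left[OF _ sub, of x] sum by (simp add: J_def)
  have "J \<noteq> {}" using sum_J Qn_pos[OF m] by auto
  then have "Min J \<in> J" using fin by simp
  have "J \<subseteq> {Min J..Min J + int m}"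
  proof
    fix k assume "k \<in> J"
    then show "k \<in> {Min J..Min J + int m}"
      using fin \<open>Min J \<in> J\<close> hseq_dilate_nonzero_diff_le[OF m, of "Min J" \<gamma> k]
      by (auto simp: J_def x_def)
  qed
  then have card_J: "card J \<le> m + 1" using card_mono[of "{Min J..Min J + int m}" J] by simp
  have "(\<Sum>\<^sub>\<infinity>j::int. \<bar>x j\<bar>\<^sup>2) = (\<Sum>j\<in>J. (x j)\<^sup>2)"
    using fin by (subst infsum_eq_sum_if_vanishing_outside[of J]) (auto simp: J_def)
  moreover have "(\<Sum>j\<in>J. x j)\<^sup>2 \<le> (\<Sum>j\<in>J. (x j)\<^sup>2) * card J"
    by (rule sum_squared_le_sum_of_squares)
  moreover have "(\<Sum>j\<in>J. (x j)\<^sup>2) * card J \<le> (\<Sum>j\<in>J. (x j)\<^sup>2) * (m + 1)"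
    using card_J by (intro mult_left_mono sum_nonneg) auto
  moreover have "(\<Sum>j\<in>J. (x j)\<^sup>2) \<le> (\<Sum>j\<in>J. x j)\<^sup>2"
    using fin by (intro sum_power2_le_power2_sum) (simp_all add: x_def hseq_nonneg)
  ultimately show "(Qn c m)\<^sup>2 \<le> real (m + 1) * (\<Sum>\<^sub>\<infinity>j::int. \<bar>x j\<bar>\<^sup>2)"
    and "(\<Sum>\<^sub>\<infinity>j::int. \<bar>x j\<bar>\<^sup>2) \<le> (Qn c m)\<^sup>2"
    using sum_J by (simp_all add: mult.commute)
qed

lemma hseq_dilation_sum_normalized:
  assumes "n \<ge> 2" "\<gamma> \<noteq> 0"
  shows "1 / Qn c (n - 1) * (\<Sum>\<^sub>\<infinity>j::int. hseq c n (c powi j * \<gamma>)) = 1"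
proof -
  obtain m where n: "n = Suc m" and m: "m \<ge> 1" using assms(1) by (cases n) auto
  show ?thesis using infsum_hseq_dilates[OF m assms(2)] Qn_pos[OF m] by (simp add: n)
qed

lemma hseq_dilation_square_sum_bounds:
  assumes "n \<ge> 2"
  shows "\<exists>C>0. \<forall>\<gamma>. \<gamma> \<noteq> 0 \<longrightarrow>
           C \<le> 1 / (Qn c (n - 1))\<^sup>2 * (\<Sum>\<^sub>\<infinity>j::int. \<bar>hseq c n (c powi j * \<gamma>)\<bar>\<^sup>2)
         \<and> 1 / (Qn c (n - 1))\<^sup>2 * (\<Sum>\<^sub>\<infinity>j::int. \<bar>hseq c n (c powi j * \<gamma>)\<bar>\<^sup>2) \<le> 1"
proof (intro exI[of _ "1 / real n"] conjI allI impI)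
  obtain m where n: "n = Suc m" and m: "m \<ge> 1" using assms by (cases n) auto
  show "0 < 1 / real n" using assms by simp
  fix \<gamma> :: real assume "\<gamma> \<noteq> 0"
  note bounds = infsum_hseq_dilates_squared_bounds[OF m this]
  have "0 < (Qn c m)\<^sup>2" using Qn_pos[OF m] by simp
  then show "1 / real n \<le> 1 / (Qn c (n - 1))\<^sup>2 * (\<Sum>\<^sub>\<infinity>j::int. \<bar>hseq c n (c powi j * \<gamma>)\<bar>\<^sup>2)"
    and "1 / (Qn c (n - 1))\<^sup>2 * (\<Sum>\<^sub>\<infinity>j::int. \<bar>hseq c n (c powi j * \<gamma>)\<bar>\<^sup>2) \<le> 1"
    using bounds by (simp_all add: n field_simps)
qed

end

theorem proposition3p7:
  fixes c :: real
  assumes "0 < c" and "c < 1"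
  shows
    "(\<forall>n\<ge>1. spline_with_knots (knots c n) (hseq c n))
   \<and> (\<forall>n\<ge>1. \<forall>\<gamma>. hseq c n (-\<gamma>) = hseq c n \<gamma>)
   \<and> (\<forall>n\<ge>2. Ck (n - 2) (hseq c n))
   \<and> (\<forall>n\<ge>1. closure {\<gamma>. hseq c n \<gamma> \<noteq> 0} = {-1..-(c ^ n)} \<union> {c ^ n..1}
             \<and> (\<forall>\<gamma> \<in> {-1<..<-(c ^ n)} \<union> {c ^ n<..<1}. hseq c n \<gamma> > 0))
   \<and> (\<forall>n\<ge>1. Qn c n > 0) \<and> Qn c 1 = 2 * (1 - c)
   \<and> (\<forall>n\<ge>2. \<forall>\<gamma>. \<gamma> \<noteq> 0 \<longrightarrow>
         1 / Qn c (n - 1) * (\<Sum>\<^sub>\<infinity>j::int. hseq c n (c powi j * \<gamma>)) = 1)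
   \<and> (\<forall>n\<ge>2. \<exists>C>0. \<forall>\<gamma>. \<gamma> \<noteq> 0 \<longrightarrow>
         C \<le> 1 / (Qn c (n - 1))\<^sup>2 * (\<Sum>\<^sub>\<infinity>j::int. \<bar>hseq c n (c powi j * \<gamma>)\<bar>\<^sup>2)
       \<and> 1 / (Qn c (n - 1))\<^sup>2 * (\<Sum>\<^sub>\<infinity>j::int. \<bar>hseq c n (c powi j * \<gamma>)\<bar>\<^sup>2) \<le> 1)
   \<and> (\<forall>n\<ge>2. \<forall>\<gamma>. hseq c n \<gamma> = 2 / (real n - 1) *
         ((1 - \<bar>\<gamma>\<bar>) * hseq c (n - 1) \<gamma>
          + (\<bar>\<gamma>\<bar> / c - c ^ (n - 1)) * hseq c (n - 1) (\<gamma> / c)))"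
proof -
  interpret knot_ratio c using assms by unfold_locales
  show ?thesis
    using hseq_spline hseq_even hseq_Ck hseq_closure_support hseq_pos Qn_pos Qn_1
      hseq_dilation_sum_normalized hseq_dilation_square_sum_bounds hseq_recurrence
    by blast
qed

end
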